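(* Let $G$ be a graph, let $\mathcal{P}=(X_1,\ldots,X_l)$ be a path decomposition of width $k$ of $G$, and let $S\subseteq V(G)$ be such that the number $c$ of $S$-branches satisfies $c>k$. Let $H_1,\ldots,H_c$ be the $S$-branches indexed so that $\alpha(H_1)\leq\cdots\leq\alpha(H_c)$, and let $H^1,\ldots,H^c$ be the $S$-branches indexed so that $\beta(H^1)\leq\cdots\leq\beta(H^c)$. Then (i) $\alpha(H_i)\geq\alpha(x)$ for all $i\geq k+1$ and all $x\in S$; (ii) $\beta(H^i)\leq\beta(x)$ for all $i\leq c-k$ and all $x\in S$.
   Context: A path decomposition of $G$ is a sequence $(X_1,\ldots,X_l)$ of subsets of $V(G)$ covering $V(G)$, such that every edge lies in some $X_i$, and $X_i\cap X_k\subseteq X_j$ whenever $i\leq j\leq k$; its width is $\max_i|X_i|-1$. For a subgraph $H$ (or vertex $v$, viewed as a one-vertex subgraph), $\alpha(H)=\min\{i: X_i\cap V(H)\neq\emptyset\}$ and $\beta(H)=\max\{i: X_i\cap V(H)\neq\emptyset\}$. For $S\subseteq V(G)$, an $S$-component is a connected component $H$ of $G-S$ such that every vertex of $S$ has a neighbor in $V(H)$; an $S$-branch is an $S$-component with at least two vertices. *)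

theory Defs
  imports Main
begin

definition graph :: "'a set \<Rightarrow> ('a \<Rightarrow> 'a \<Rightarrow> bool) \<Rightarrow> bool" where
  "graph V E \<longleftrightarrow> finite V \<and> (\<forall>u v. E u v \<longrightarrow> u \<in> V \<and> v \<in> V \<and> u \<noteq> v \<and> E v u)"

definition path_decomposition ::
  "'a set \<Rightarrow> ('a \<Rightarrow> 'a \<Rightarrow> bool) \<Rightarrow> (nat \<Rightarrow> 'a set) \<Rightarrow> nat \<Rightarrow> bool" where
  "path_decomposition V E X l \<longleftrightarrow>
     (\<forall>i\<in>{1..l}. X i \<subseteq> V) \<and>
     (\<Union>i\<in>{1..l}. X i) = V \<and>
     (\<forall>u v. E u v \<longrightarrow> (\<exists>i\<in>{1..l}. u \<in> X i \<and> v \<in> X i)) \<and>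
     (\<forall>i j m. 1 \<le> i \<and> i \<le> j \<and> j \<le> m \<and> m \<le> l \<longrightarrow> X i \<inter> X m \<subseteq> X j)"

definition pd_width :: "(nat \<Rightarrow> 'a set) \<Rightarrow> nat \<Rightarrow> nat" where
  "pd_width X l = Max ((\<lambda>i. card (X i)) ` {1..l}) - 1"

text \<open>alpha and beta of a vertex set H (a subgraph, or a single vertex as {x}).\<close>
definition pd_alpha :: "(nat \<Rightarrow> 'a set) \<Rightarrow> nat \<Rightarrow> 'a set \<Rightarrow> nat" where
  "pd_alpha X l H = Min {i\<in>{1..l}. X i \<inter> H \<noteq> {}}"

definition pd_beta :: "(nat \<Rightarrow> 'a set) \<Rightarrow> nat \<Rightarrow> 'a set \<Rightarrow> nat" where
  "pd_beta X l H = Max {i\<in>{1..l}. X i \<inter> H \<noteq> {}}"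

definition comp_of :: "'a set \<Rightarrow> ('a \<Rightarrow> 'a \<Rightarrow> bool) \<Rightarrow> 'a set \<Rightarrow> 'a \<Rightarrow> 'a set" where
  "comp_of V E S v =
     {w. (\<lambda>x y. E x y \<and> x \<in> V - S \<and> y \<in> V - S)\<^sup>*\<^sup>* v w}"

definition S_components :: "'a set \<Rightarrow> ('a \<Rightarrow> 'a \<Rightarrow> bool) \<Rightarrow> 'a set \<Rightarrow> 'a set set" where
  "S_components V E S =
     {C. (\<exists>v\<in>V - S. C = comp_of V E S v) \<and> (\<forall>x\<in>S. \<exists>y\<in>C. E x y)}"

definition S_branches :: "'a set \<Rightarrow> ('a \<Rightarrow> 'a \<Rightarrow> bool) \<Rightarrow> 'a set \<Rightarrow> 'a set set" where
  "S_branches V E S = {C \<in> S_components V E S. card C \<ge> 2}"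

end

theory Submission
  imports Defs
begin

text \<open>Fix a vertex x \<in> S and let j = \<alpha>(x). Every S-component C contains a neighbour y of x, and
  the bag containing the edge xy has index at least j. If moreover \<alpha>(C) < j, then C, being
  connected, has vertices in bags on both sides of j and therefore meets X_j. Distinct components
  are disjoint and avoid x, so at most |X_j| - 1 \<le> k components have \<alpha>(C) < \<alpha>(x); since
  H_1, \<dots>, H_i all satisfy this when \<alpha>(H_i) < \<alpha>(x), part (i) follows. Part (ii) is the mirror
  image with \<beta>.\<close>

lemma path_decomposition_bag_exists:
  assumes "path_decomposition V E X l" "v \<in> V"
  obtains i where "i \<in> {1..l}" "v \<in> X i"
  using assms unfolding path_decomposition_def by blast

lemma path_decomposition_edge_bag:
  assumes "path_decomposition V E X l" "E u v"
  obtains i where "i \<in> {1..l}" "u \<in> X i" "v \<in> X i"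
  using assms unfolding path_decomposition_def by blast

lemma path_decomposition_between:
  assumes "path_decomposition V E X l" "w \<in> X a" "w \<in> X b" "1 \<le> a" "a \<le> j" "j \<le> b" "b \<le> l"
  shows "w \<in> X j"
  using assms unfolding path_decomposition_def by blast

lemma card_bag_le_width:
  assumes "j \<in> {1..l}"
  shows "card (X j) \<le> pd_width X l + 1"
proof -
  have "card (X j) \<le> Max ((\<lambda>i. card (X i)) ` {1..l})"
    using assms by (intro Max_ge) auto
  then show ?thesis unfolding pd_width_def by linarith
qed

lemma finite_bag:
  assumes "graph V E" "path_decomposition V E X l" "j \<in> {1..l}"
  shows "finite (X j)"
proof -
  have "X j \<subseteq> V" using assms(2,3) unfolding path_decomposition_def by blast
  moreover have "finite V" using assms(1) unfolding graph_def by blast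
  ultimately show ?thesis by (rule finite_subset)
qed

lemma walk_meets_bag:
  assumes pd: "path_decomposition V E X l"
    and sub: "\<And>x y. R x y \<Longrightarrow> E x y"
    and walk: "R\<^sup>*\<^sup>* u w"
    and u: "u \<in> X a" "1 \<le> a" "a \<le> j"
    and w: "w \<in> X b" "j \<le> b" "b \<le> l"
  shows "\<exists>z. R\<^sup>*\<^sup>* u z \<and> z \<in> X j"
  using walk w
proof (induction arbitrary: b rule: rtranclp_induct)
  case base
  then show ?case using path_decomposition_between[OF pd u(1) _ u(2,3)] by blast
next
  case (step y z)
  obtain e where e: "e \<in> {1..l}" "y \<in> X e" "z \<in> X e"
    using path_decomposition_edge_bag[OF pd sub[OF step.hyps(2)]] by blast
  show ?case
  proof (cases "j \<le> e")
    case True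
    then show ?thesis using step.IH e by auto
  next
    case False
    then have "z \<in> X j"
      using path_decomposition_between[OF pd e(3) step.prems(1)] e(1) step.prems(2,3) by simp
    then show ?thesis using step.hyps by (blast intro: rtranclp.rtrancl_into_rtrancl)
  qed
qed

definition minus_adj :: "'a set \<Rightarrow> ('a \<Rightarrow> 'a \<Rightarrow> bool) \<Rightarrow> 'a set \<Rightarrow> 'a \<Rightarrow> 'a \<Rightarrow> bool" where
  "minus_adj V E S x y \<longleftrightarrow> E x y \<and> x \<in> V - S \<and> y \<in> V - S"

lemma mem_comp_of_iff: "w \<in> comp_of V E S v \<longleftrightarrow> (minus_adj V E S)\<^sup>*\<^sup>* v w"
  unfolding comp_of_def minus_adj_def by simp

lemma symp_minus_adj: "graph V E \<Longrightarrow> symp (minus_adj V E S)"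
  unfolding graph_def minus_adj_def by (auto intro: sympI)

lemma minus_adj_rtranclp_sym:
  "graph V E \<Longrightarrow> (minus_adj V E S)\<^sup>*\<^sup>* u w \<Longrightarrow> (minus_adj V E S)\<^sup>*\<^sup>* w u"
  by (rule sympD[OF symp_rtranclp[OF symp_minus_adj]])

lemma comp_of_connected:
  assumes "graph V E" "u \<in> comp_of V E S v" "w \<in> comp_of V E S v"
  shows "(minus_adj V E S)\<^sup>*\<^sup>* u w"
proof -
  have "(minus_adj V E S)\<^sup>*\<^sup>* u v"
    using assms(1,2) minus_adj_rtranclp_sym by (simp add: mem_comp_of_iff)
  then show ?thesis using assms(3) by (simp add: mem_comp_of_iff)
qed

lemma comp_of_eqI:
  assumes "graph V E" "w \<in> comp_of V E S v" "w \<in> comp_of V E S v'"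
  shows "comp_of V E S v = comp_of V E S v'"
proof -
  have "(minus_adj V E S)\<^sup>*\<^sup>* w v'"
    using assms(1,3) minus_adj_rtranclp_sym by (simp add: mem_comp_of_iff)
  then have "(minus_adj V E S)\<^sup>*\<^sup>* v v'"
    using assms(2) by (simp add: mem_comp_of_iff)
  then have "(minus_adj V E S)\<^sup>*\<^sup>* v' v" by (rule minus_adj_rtranclp_sym[OF assms(1)])
  then show ?thesis using \<open>(minus_adj V E S)\<^sup>*\<^sup>* v v'\<close>
    by (auto simp: mem_comp_of_iff intro: rtranclp_trans)
qed

lemma comp_of_subset:
  assumes "v \<in> V - S"
  shows "comp_of V E S v \<subseteq> V - S"
proof
  fix w assume "w \<in> comp_of V E S v"
  then have "(minus_adj V E S)\<^sup>*\<^sup>* v w" by (simp add: mem_comp_of_iff)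
  then show "w \<in> V - S"
    by (induction rule: rtranclp_induct) (use assms in \<open>auto simp: minus_adj_def\<close>)
qed

lemma S_componentE:
  assumes "C \<in> S_components V E S"
  obtains v where "v \<in> V - S" "C = comp_of V E S v"
  using assms unfolding S_components_def by blast

lemma S_component_subset: "C \<in> S_components V E S \<Longrightarrow> C \<subseteq> V - S"
  by (elim S_componentE) (simp add: comp_of_subset)

lemma S_component_nonempty: "C \<in> S_components V E S \<Longrightarrow> C \<noteq> {}"
  by (elim S_componentE) (auto simp: mem_comp_of_iff)

lemma S_components_disjoint:
  assumes "graph V E" "C \<in> S_components V E S" "D \<in> S_components V E S" "w \<in> C" "w \<in> D"
  shows "C = D"
  using assms(2,3) by (elim S_componentE) (use assms(1,4,5) comp_of_eqI in simp)

lemma S_branches_subset_S_components: "S_branches V E S \<subseteq> S_components V E S"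
  unfolding S_branches_def by blast

lemma S_component_meets_bag:
  assumes g: "graph V E" and pd: "path_decomposition V E X l"
    and C: "C \<in> S_components V E S"
    and "X a \<inter> C \<noteq> {}" "X b \<inter> C \<noteq> {}" "1 \<le> a" "a \<le> j" "j \<le> b" "b \<le> l"
  shows "X j \<inter> C \<noteq> {}"
proof -
  obtain v where v: "C = comp_of V E S v" using S_componentE[OF C] by blast
  obtain u w where uw: "u \<in> C" "u \<in> X a" "w \<in> C" "w \<in> X b" using assms(4,5) by blast
  have "(minus_adj V E S)\<^sup>*\<^sup>* u w" using comp_of_connected[OF g] uw v by blast
  then obtain z where z: "(minus_adj V E S)\<^sup>*\<^sup>* u z" "z \<in> X j"
    using walk_meets_bag[OF pd _ _ uw(2) _ _ uw(4), of "minus_adj V E S" j] assms(6-9)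
    by (auto simp: minus_adj_def)
  have "z \<in> C" using z(1) uw(1) v by (auto simp: mem_comp_of_iff intro: rtranclp_trans)
  then show ?thesis using z(2) by blast
qed

lemma S_component_meets_bag_of_vertex:
  assumes pd: "path_decomposition V E X l" and "C \<in> S_components V E S" "x \<in> S"
  obtains e where "e \<in> {1..l}" "x \<in> X e" "X e \<inter> C \<noteq> {}"
proof -
  obtain y where "y \<in> C" "E x y" using assms(2,3) unfolding S_components_def by blast
  with path_decomposition_edge_bag[OF pd] that show ?thesis by blast
qed

text \<open>Strict, because x lies in X_j but in no S-component.\<close>

lemma card_S_components_meeting_bag:
  assumes g: "graph V E" and pd: "path_decomposition V E X l" and j: "j \<in> {1..l}"
    and x: "x \<in> S" "x \<in> X j"
    and B: "B \<subseteq> S_components V E S" "\<forall>C\<in>B. X j \<inter> C \<noteq> {}"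
  shows "card B < card (X j)"
proof -
  obtain rep where rep: "\<forall>C\<in>B. rep C \<in> X j \<inter> C"
    using bchoice[of B "\<lambda>C z. z \<in> X j \<inter> C"] B(2) by blast
  have "inj_on rep B"
    using rep B(1) S_components_disjoint[OF g] by (intro inj_onI) (metis IntE subsetD)
  then have "card (rep ` B) = card B" by (rule card_image)
  moreover have "x \<notin> rep ` B" using rep B(1) S_component_subset x(1) by fastforce
  moreover have sub: "insert x (rep ` B) \<subseteq> X j" using rep x(2) by blast
  moreover have "finite (X j)" using finite_bag[OF g pd j] .
  ultimately have "card (insert x (rep ` B)) = Suc (card B)"
    by (metis card_insert_disjoint finite_subset subset_insertI)
  then show ?thesis using card_mono[OF \<open>finite (X j)\<close> sub] by simp
qed

lemma pd_alpha_le: "i \<in> {1..l} \<Longrightarrow> X i \<inter> H \<noteq> {} \<Longrightarrow> pd_alpha X l H \<le> i"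
  unfolding pd_alpha_def by (intro Min_le) auto

lemma pd_alpha_mem:
  assumes "i \<in> {1..l}" "X i \<inter> H \<noteq> {}"
  shows "pd_alpha X l H \<in> {1..l}" "X (pd_alpha X l H) \<inter> H \<noteq> {}"
proof -
  have "pd_alpha X l H \<in> {i\<in>{1..l}. X i \<inter> H \<noteq> {}}"
    unfolding pd_alpha_def using assms by (intro Min_in) auto
  then show "pd_alpha X l H \<in> {1..l}" "X (pd_alpha X l H) \<inter> H \<noteq> {}" by auto
qed

lemma le_pd_beta: "i \<in> {1..l} \<Longrightarrow> X i \<inter> H \<noteq> {} \<Longrightarrow> i \<le> pd_beta X l H"
  unfolding pd_beta_def by (intro Max_ge) auto

lemma pd_beta_mem:
  assumes "i \<in> {1..l}" "X i \<inter> H \<noteq> {}"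
  shows "pd_beta X l H \<in> {1..l}" "X (pd_beta X l H) \<inter> H \<noteq> {}"
proof -
  have "pd_beta X l H \<in> {i\<in>{1..l}. X i \<inter> H \<noteq> {}}"
    unfolding pd_beta_def using assms by (intro Max_in) auto
  then show "pd_beta X l H \<in> {1..l}" "X (pd_beta X l H) \<inter> H \<noteq> {}" by auto
qed

lemma S_component_meets_some_bag:
  assumes "path_decomposition V E X l" "C \<in> S_components V E S"
  obtains i where "i \<in> {1..l}" "X i \<inter> C \<noteq> {}"
proof -
  obtain v where "v \<in> C" using S_component_nonempty[OF assms(2)] by blast
  moreover have "v \<in> V" using S_component_subset[OF assms(2)] \<open>v \<in> C\<close> by blast
  ultimately show thesis using path_decomposition_bag_exists[OF assms(1)] that by blast
qed

lemma card_S_components_alpha_less_le_width: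
  assumes g: "graph V E" and pd: "path_decomposition V E X l" and x: "x \<in> S" "S \<subseteq> V"
    and B: "B \<subseteq> S_components V E S" "\<forall>C\<in>B. pd_alpha X l C < pd_alpha X l {x}"
  shows "card B \<le> pd_width X l"
proof -
  define j where "j = pd_alpha X l {x}"
  obtain i where "i \<in> {1..l}" "x \<in> X i" using path_decomposition_bag_exists[OF pd] x by blast
  then have j: "j \<in> {1..l}" "x \<in> X j" using pd_alpha_mem[of i l X "{x}"] unfolding j_def by auto
  have "X j \<inter> C \<noteq> {}" if C: "C \<in> B" for C
  proof -
    have CS: "C \<in> S_components V E S" using C B(1) by blast
    obtain e where e: "e \<in> {1..l}" "x \<in> X e" "X e \<inter> C \<noteq> {}"
      using S_component_meets_bag_of_vertex[OF pd CS x(1)] by blast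
    obtain i where i: "i \<in> {1..l}" "X i \<inter> C \<noteq> {}"
      using S_component_meets_some_bag[OF pd CS] by blast
    note C_alpha = pd_alpha_mem[of i l X C, OF i]
    have "j \<le> e" unfolding j_def by (rule pd_alpha_le) (use e in auto)
    moreover have "pd_alpha X l C < j" using B(2) C unfolding j_def by blast
    ultimately show ?thesis
      by (intro S_component_meets_bag[OF g pd CS C_alpha(2) e(3)]) (use C_alpha(1) e(1) in auto)
  qed
  then have "card B < card (X j)" using card_S_components_meeting_bag[OF g pd j(1) x(1) j(2) B(1)] by blast
  with card_bag_le_width[of j l X, OF j(1)] show ?thesis by simp
qed

lemma card_S_components_beta_greater_le_width:
  assumes g: "graph V E" and pd: "path_decomposition V E X l" and x: "x \<in> S" "S \<subseteq> V"
    and B: "B \<subseteq> S_components V E S" "\<forall>C\<in>B. pd_beta X l {x} < pd_beta X l C"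
  shows "card B \<le> pd_width X l"
proof -
  define j where "j = pd_beta X l {x}"
  obtain i where "i \<in> {1..l}" "x \<in> X i" using path_decomposition_bag_exists[OF pd] x by blast
  then have j: "j \<in> {1..l}" "x \<in> X j" using pd_beta_mem[of i l X "{x}"] unfolding j_def by auto
  have "X j \<inter> C \<noteq> {}" if C: "C \<in> B" for C
  proof -
    have CS: "C \<in> S_components V E S" using C B(1) by blast
    obtain e where e: "e \<in> {1..l}" "x \<in> X e" "X e \<inter> C \<noteq> {}"
      using S_component_meets_bag_of_vertex[OF pd CS x(1)] by blast
    obtain i where i: "i \<in> {1..l}" "X i \<inter> C \<noteq> {}"
      using S_component_meets_some_bag[OF pd CS] by blast
    note C_beta = pd_beta_mem[of i l X C, OF i]
    have "e \<le> j" unfolding j_def by (rule le_pd_beta) (use e in auto)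
    moreover have "j < pd_beta X l C" using B(2) C unfolding j_def by blast
    ultimately show ?thesis
      by (intro S_component_meets_bag[OF g pd CS e(3) C_beta(2)]) (use C_beta(1) e(1) in auto)
  qed
  then have "card B < card (X j)" using card_S_components_meeting_bag[OF g pd j(1) x(1) j(2) B(1)] by blast
  with card_bag_le_width[of j l X, OF j(1)] show ?thesis by simp
qed

theorem mainTheorem12:
  fixes V :: "'a set" and E :: "'a \<Rightarrow> 'a \<Rightarrow> bool" and X :: "nat \<Rightarrow> 'a set"
    and l k c :: nat and S :: "'a set"
    and Hl Hu :: "nat \<Rightarrow> 'a set"
  assumes "graph V E"
    and "path_decomposition V E X l"
    and "pd_width X l = k"
    and "S \<subseteq> V"
    and "c = card (S_branches V E S)"
    and "c > k"
    and "bij_betw Hl {1..c} (S_branches V E S)"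
    and "\<forall>i j. 1 \<le> i \<and> i \<le> j \<and> j \<le> c \<longrightarrow> pd_alpha X l (Hl i) \<le> pd_alpha X l (Hl j)"
    and "bij_betw Hu {1..c} (S_branches V E S)"
    and "\<forall>i j. 1 \<le> i \<and> i \<le> j \<and> j \<le> c \<longrightarrow> pd_beta X l (Hu i) \<le> pd_beta X l (Hu j)"
  shows "(\<forall>i\<in>{k+1..c}. \<forall>x\<in>S. pd_alpha X l (Hl i) \<ge> pd_alpha X l {x})
       \<and> (\<forall>i\<in>{1..c-k}. \<forall>x\<in>S. pd_beta X l (Hu i) \<le> pd_beta X l {x})"
proof (intro conjI ballI; rule ccontr)
  fix i x assume i: "i \<in> {k+1..c}" and x: "x \<in> S"
    and early: "\<not> pd_alpha X l {x} \<le> pd_alpha X l (Hl i)"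
  have sub: "Hl ` {1..i} \<subseteq> S_components V E S"
    using i bij_betw_apply[OF assms(7)] S_branches_subset_S_components[of V E S] by auto
  have "pd_alpha X l (Hl m) < pd_alpha X l {x}" if "m \<in> {1..i}" for m
    using assms(8)[rule_format, of m i] that i early by simp
  then have "card (Hl ` {1..i}) \<le> k"
    using card_S_components_alpha_less_le_width[OF assms(1,2) x assms(4) sub] assms(3) by simp
  moreover have "card (Hl ` {1..i}) = i"
    using i inj_on_subset[OF bij_betw_imp_inj_on[OF assms(7)], of "{1..i}"] by (simp add: card_image)
  ultimately show False using i by simp
next
  fix i x assume i: "i \<in> {1..c-k}" and x: "x \<in> S"
    and late: "\<not> pd_beta X l (Hu i) \<le> pd_beta X l {x}"
  have sub: "Hu ` {i..c} \<subseteq> S_components V E S"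
    using i bij_betw_apply[OF assms(9)] S_branches_subset_S_components[of V E S] by auto
  have "pd_beta X l {x} < pd_beta X l (Hu m)" if "m \<in> {i..c}" for m
    using assms(10)[rule_format, of i m] that i late by simp
  then have "card (Hu ` {i..c}) \<le> k"
    using card_S_components_beta_greater_le_width[OF assms(1,2) x assms(4) sub] assms(3) by simp
  moreover have "card (Hu ` {i..c}) = c + 1 - i"
    using i inj_on_subset[OF bij_betw_imp_inj_on[OF assms(9)], of "{i..c}"] by (simp add: card_image)
  moreover have "i \<le> c - k" using i by simp
  ultimately show False using assms(6) by arith
qed

end
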